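(* Let $G$ be a finite group of order greater than $1$ and let $q$ be the smallest prime divisor of $|G|$. If ${\rm mf}_{pp}(G)<q$, then $G$ is cyclic.
   Context: All groups are finite. For a group $G$ and a positive integer $n$ dividing $|G|$, let $F_n(G)=\{g\in G\mid g^n=1\}$. By Frobenius' theorem $|F_n(G)|=f_n\cdot n$ for a positive integer $f_n$, called the Frobenius quotient of $G$ for $n$. ${\rm exp}(G)$ denotes the exponent of $G$. A prime-power divisor of ${\rm exp}(G)$ is a positive divisor $n$ of ${\rm exp}(G)$ of the form $n=p^k$ with $p$ prime and $k\geq 0$ (so $n=1$ is included). $\mathcal{F}_{pp}(G)=\{f_n\mid n \text{ is a prime-power divisor of } {\rm exp}(G)\}$ and ${\rm mf}_{pp}(G)$ is the maximum element of $\mathcal{F}_{pp}(G)$. *)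

theory Defs
  imports "HOL-Algebra.Algebra" "HOL-Computational_Algebra.Primes"
begin

definition group_exp :: "('a, 'b) monoid_scheme \<Rightarrow> nat" where
  "group_exp G = Lcm (group.ord G ` carrier G)"

definition sol_set :: "('a, 'b) monoid_scheme \<Rightarrow> nat \<Rightarrow> 'a set" where
  "sol_set G n = {g \<in> carrier G. g [^]\<^bsub>G\<^esub> n = \<one>\<^bsub>G\<^esub>}"

text \<open>Frobenius quotient f_n = |F_n(G)| / n (an integer when n divides |G|).\<close>
definition frob_quot :: "('a, 'b) monoid_scheme \<Rightarrow> nat \<Rightarrow> nat" where
  "frob_quot G n = card (sol_set G n) div n"

text \<open>Prime-power divisors of exp(G), including 1.\<close>
definition pp_divisors :: "('a, 'b) monoid_scheme \<Rightarrow> nat set" where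
  "pp_divisors G = {n. n dvd group_exp G \<and> (\<exists>p k. Factorial_Ring.prime (p::nat) \<and> n = p ^ k)}"

definition F_pp :: "('a, 'b) monoid_scheme \<Rightarrow> nat set" where
  "F_pp G = frob_quot G ` pp_divisors G"

definition mf_pp :: "('a, 'b) monoid_scheme \<Rightarrow> nat" where
  "mf_pp G = Max (F_pp G)"

end

theory Submission
  imports Defs "HOL-Number_Theory.Totient"
begin

(* Let p be a prime with p^a || |G|; every Frobenius quotient is < q <= p.
   (1) G has an element x of order p^a: if y has maximal order p^j in a Sylow p-subgroup P,
       then P lies in F_{p^j}, so p^(a-j) <= f_{p^j} < p, forcing j = a.
   (2) F_{p^a} = <x>: conjugation by <x> permutes the cyclic subgroups of order p^a with
       <x> as its only fixed point, so their number is 1 mod p.  Their generators together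
       with <x> lie in F_{p^a}, which has fewer than p * p^a elements, so there is only one;
       hence every solution of y^(p^a) = 1 normalizes <x> and therefore lies in it.
   So |F_d| <= d for prime powers d dividing |G|, hence for all divisors d, since
   g |-> (g^n, g^m) embeds F_{mn} into F_m x F_n for coprime m, n.  Comparing with
   sum_{d | n} totient d = n then yields an element of order |G|. *)

no_notation (ASCII) subset_mset (infix \<open><#\<close> 50) \<comment> \<open>clashes with left cosets\<close>

context group begin

lemma nat_pow_conj:
  assumes "g \<in> carrier G" "z \<in> carrier G"
  shows "(g \<otimes> z \<otimes> inv g) [^] (n::nat) = g \<otimes> z [^] n \<otimes> inv g"
proof (induction n)
  case (Suc n)
  have "(g \<otimes> z \<otimes> inv g) [^] Suc n = (g \<otimes> z [^] n \<otimes> inv g) \<otimes> (g \<otimes> z \<otimes> inv g)"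
    using Suc by simp
  also have "\<dots> = g \<otimes> z [^] Suc n \<otimes> inv g"
    using assms by (simp add: m_assoc) (simp add: m_assoc [symmetric])
  finally show ?case .
qed (use assms in simp)

lemma ord_conj:
  assumes g: "g \<in> carrier G" and z: "z \<in> carrier G"
  shows "ord (g \<otimes> z \<otimes> inv g) = ord z"
proof -
  have "(g \<otimes> z \<otimes> inv g) [^] n = \<one> \<longleftrightarrow> ord z dvd n" for n :: nat
    using g z by (simp add: nat_pow_conj inv_solve_right' pow_eq_id)
  then show ?thesis using ord_unique g z by simp
qed

lemma generate_singleton_eq_range:
  assumes "finite (carrier G)" "a \<in> carrier G"
  shows "generate G {a} = range (\<lambda>k::nat. a [^] k)"
  using generate_pow_on_finite_carrier[OF assms] by auto

lemma conj_generate_singleton: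
  assumes fin: "finite (carrier G)" and g: "g \<in> carrier G" and z: "z \<in> carrier G"
  shows "g <# generate G {z} #> inv g = generate G {g \<otimes> z \<otimes> inv g}"
proof -
  have "g <# H #> inv g = (\<lambda>h. g \<otimes> h \<otimes> inv g) ` H" for H
    unfolding l_coset_def r_coset_def by auto
  then show ?thesis
    using g z by (simp add: generate_singleton_eq_range[OF fin] image_image nat_pow_conj)
qed

lemma subgroup_eq_generate_if_card_eq_ord:
  assumes "finite (carrier G)" "subgroup H G" "z \<in> H" "card H = ord z"
  shows "H = generate G {z}"
proof -
  have "generate G {z} \<subseteq> H" using generate_subgroup_incl assms(2,3) by blast
  moreover have "finite H" using assms(1,2) subgroup.subset finite_subset by metis
  ultimately show ?thesis
    using generate_pow_card[of z] assms subgroup.mem_carrier card_subset_eq by metis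
qed

lemma nat_pow_mod_ord:
  assumes "a \<in> carrier G"
  shows "a [^] (k mod ord a) = a [^] k"
proof -
  have "a [^] k = (a [^] ord a) [^] (k div ord a) \<otimes> a [^] (k mod ord a)"
    using assms by (simp add: nat_pow_pow nat_pow_mult del: pow_ord_eq_1)
  then show ?thesis using assms by simp
qed

lemma generate_singleton_eq_image_atLeastAtMost:
  assumes fin: "finite (carrier G)" and a: "a \<in> carrier G"
  shows "generate G {a} = (\<lambda>k. a [^] k) ` {1..ord a}"
proof -
  have "a [^] k \<in> (\<lambda>k. a [^] k) ` {1..ord a}" for k :: nat
  proof -
    have pos: "ord a > 0" using ord_ge_1[OF fin a] by simp
    define r where "r = (if k mod ord a = 0 then ord a else k mod ord a)"
    have "a [^] k = a [^] r"
      using a nat_pow_mod_ord[of a k] nat_pow_mod_ord[of a "ord a"] unfolding r_def by auto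
    moreover have "r \<in> {1..ord a}" using pos unfolding r_def by auto
    ultimately show ?thesis by blast
  qed
  then show ?thesis using generate_singleton_eq_range[OF fin a] by auto
qed

lemma card_generators_generate:
  assumes fin: "finite (carrier G)" and a: "a \<in> carrier G"
  shows "card {y \<in> generate G {a}. ord y = ord a} = totient (ord a)"
proof -
  have "{y \<in> generate G {a}. ord y = ord a} = (\<lambda>k. a [^] k) ` {k \<in> {1..ord a}. ord (a [^] k) = ord a}"
    unfolding generate_singleton_eq_image_atLeastAtMost[OF fin a] by blast
  also have "{k \<in> {1..ord a}. ord (a [^] k) = ord a} = totatives (ord a)"
    using pow_ord_eq_ord_iff[OF fin a] by (auto simp: totatives_def)
  finally have "{y \<in> generate G {a}. ord y = ord a} = (\<lambda>k. a [^] k) ` totatives (ord a)" .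
  moreover have "inj_on (\<lambda>k. a [^] k) (totatives (ord a))"
    using ord_inj'[OF a] by (rule inj_on_subset) (auto simp: totatives_def)
  ultimately show ?thesis by (simp add: card_image totient_def)
qed

lemma card_pow_eq_one_in_generate_le:
  assumes fin: "finite (carrier G)" and a: "a \<in> carrier G" and "d dvd ord a"
  shows "card {y \<in> generate G {a}. y [^] d = \<one>} \<le> d"
proof -
  obtain s where s: "ord a = d * s" using assms(3) by blast
  have pos: "d > 0" "s > 0" using ord_ge_1[OF fin a] s by auto
  have "{y \<in> generate G {a}. y [^] d = \<one>} \<subseteq> (\<lambda>j. a [^] (s * j)) ` {..<d}"
  proof
    fix y assume y: "y \<in> {y \<in> generate G {a}. y [^] d = \<one>}"
    then obtain k :: nat where k: "y = a [^] (k mod ord a)"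
      using generate_singleton_eq_range[OF fin a] nat_pow_mod_ord[OF a] by auto
    then have "a [^] (k mod ord a * d) = \<one>" using y a by (simp add: nat_pow_pow)
    then have "d * s dvd d * (k mod ord a)" using a s by (simp add: pow_eq_id mult.commute)
    then obtain j where j: "k mod ord a = s * j" using pos by auto
    have "k mod ord a < d * s" using s pos by simp
    then have "j < d" using j pos by (simp add: mult.commute)
    then show "y \<in> (\<lambda>j. a [^] (s * j)) ` {..<d}" using k j by auto
  qed
  then have "card {y \<in> generate G {a}. y [^] d = \<one>} \<le> card ((\<lambda>j. a [^] (s * j)) ` {..<d})"
    by (rule card_mono[rotated]) simp
  also have "\<dots> \<le> d" using card_image_le[of "{..<d}"] by simp
  finally show ?thesis .
qed

lemma generate_subset_sol_set_ord:
  assumes fin: "finite (carrier G)" and a: "a \<in> carrier G"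
  shows "generate G {a} \<subseteq> sol_set G (ord a)"
proof
  fix y assume "y \<in> generate G {a}"
  then obtain k :: nat where k: "y = a [^] k"
    using generate_singleton_eq_range[OF fin a] by auto
  then have "y [^] ord a = \<one>"
    using a by (metis mult.commute nat_pow_one nat_pow_pow pow_ord_eq_1)
  then show "y \<in> sol_set G (ord a)" using a k by (simp add: sol_set_def)
qed

lemma generate_eq_sol_set_ord_if_card_le:
  assumes fin: "finite (carrier G)" and a: "a \<in> carrier G"
    and le: "card (sol_set G (ord a)) \<le> ord a"
  shows "generate G {a} = sol_set G (ord a)"
proof (rule card_seteq)
  show "finite (sol_set G (ord a))" using fin by (simp add: sol_set_def)
  show "generate G {a} \<subseteq> sol_set G (ord a)"
    using generate_subset_sol_set_ord[OF fin a] .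
  show "card (sol_set G (ord a)) \<le> card (generate G {a})"
    using le generate_pow_card[OF a] by simp
qed

lemma card_ord_eq_totient_if_card_sol_set_le:
  assumes fin: "finite (carrier G)" and a: "a \<in> carrier G"
    and le: "card (sol_set G (ord a)) \<le> ord a"
  shows "card {y \<in> carrier G. ord y = ord a} = totient (ord a)"
proof -
  have "{y \<in> carrier G. ord y = ord a} = {y \<in> sol_set G (ord a). ord y = ord a}"
    by (auto simp: sol_set_def simp flip: pow_ord_eq_1)
  also have "\<dots> = {y \<in> generate G {a}. ord y = ord a}"
    by (simp only: generate_eq_sol_set_ord_if_card_le[OF assms])
  finally show ?thesis using card_generators_generate[OF fin a] by simp
qed

lemma cyclic_group_if_ord_eq_order:
  assumes fin: "finite (carrier G)" and a: "a \<in> carrier G" and "ord a = order G"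
  shows "cyclic_group G"
proof -
  have "generate G {a} = carrier G"
    using fin a assms(3) generate_pow_card[OF a] generate_incl[of "{a}"]
    by (simp add: card_subset_eq order_def)
  then have "subgroup_generated G {a} = G"
    using a by (simp add: subgroup_generated_def)
  then show ?thesis using a by (auto simp: cyclic_group_def)
qed

lemma cyclic_group_if_card_ord_le_totient:
  assumes fin: "finite (carrier G)"
    and le: "\<And>d. d dvd order G \<Longrightarrow> card {a \<in> carrier G. ord a = d} \<le> totient d"
  shows "cyclic_group G"
proof -
  let ?N = "\<lambda>d. card {a \<in> carrier G. ord a = d}"
  let ?D = "{d. d dvd order G}"
  have pos: "order G > 0" using fin by (simp add: order_gt_0_iff_finite)
  then have finD: "finite ?D" by simp
  have "(\<Sum>d\<in>?D. ?N d) = card (\<Union>d\<in>?D. {a \<in> carrier G. ord a = d})"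
    using finD fin by (subst card_UN_disjoint) auto
  also have "(\<Union>d\<in>?D. {a \<in> carrier G. ord a = d}) = carrier G"
    using ord_dvd_group_order by auto
  finally have "(\<Sum>d\<in>?D. ?N d) = (\<Sum>d\<in>?D. totient d)"
    by (simp add: totient_divisor_sum order_def)
  then have "?N (order G) = totient (order G)"
    using le by (rule sum_mono_inv) (simp_all add: finD)
  then have "?N (order G) > 0" using pos by simp
  then obtain a where "a \<in> carrier G" "ord a = order G"
    by (metis (mono_tags, lifting) card.empty empty_Collect_eq less_irrefl)
  then show ?thesis using cyclic_group_if_ord_eq_order[OF fin] by blast
qed

lemma cyclic_group_if_card_sol_set_le:
  assumes fin: "finite (carrier G)"
    and le: "\<And>d. d dvd order G \<Longrightarrow> card (sol_set G d) \<le> d"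
  shows "cyclic_group G"
proof (rule cyclic_group_if_card_ord_le_totient[OF fin])
  fix d assume "d dvd order G"
  show "card {a \<in> carrier G. ord a = d} \<le> totient d"
  proof (cases "\<exists>a\<in>carrier G. ord a = d")
    case True
    then obtain a where a: "a \<in> carrier G" "ord a = d" by blast
    then have "card (sol_set G (ord a)) \<le> ord a" using le[OF \<open>d dvd order G\<close>] by simp
    then show ?thesis using card_ord_eq_totient_if_card_sol_set_le[OF fin a(1)] a(2) by simp
  next
    case False
    then have "{a \<in> carrier G. ord a = d} = {}" by blast
    then show ?thesis by (metis card.empty le0)
  qed
qed

lemma card_sol_set_mult_le:
  assumes fin: "finite (carrier G)" and "coprime m n" and "m \<noteq> 0"
  shows "card (sol_set G (m * n)) \<le> card (sol_set G m) * card (sol_set G n)"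
proof -
  obtain x y where bezout: "m * x = n * y + 1"
    using bezout_nat[OF \<open>m \<noteq> 0\<close>, of n] \<open>coprime m n\<close> by auto
  let ?f = "\<lambda>g. (g [^] n, g [^] m)"
  have "g = inv ((g [^] n) [^] y) \<otimes> (g [^] m) [^] x" if "g \<in> carrier G" for g
  proof -
    have "(g [^] m) [^] x = (g [^] n) [^] y \<otimes> g"
      using that bezout by (simp add: nat_pow_pow flip: nat_pow_mult)
    then show ?thesis using that by (simp add: m_assoc [symmetric])
  qed
  then have inj: "inj_on ?f (sol_set G (m * n))"
    by (intro inj_onI) (metis (no_types, lifting) mem_Collect_eq prod.inject sol_set_def)
  have maps: "?f ` sol_set G (m * n) \<subseteq> sol_set G m \<times> sol_set G n"
  proof (clarsimp simp: sol_set_def)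
    fix g assume "g \<in> carrier G" "g [^] (m * n) = \<one>"
    then show "(g [^] n) [^] m = \<one> \<and> (g [^] m) [^] n = \<one>"
      by (simp add: nat_pow_pow mult.commute)
  qed
  have "finite (sol_set G m \<times> sol_set G n)"
    using fin by (simp add: sol_set_def)
  with inj maps have "card (sol_set G (m * n)) \<le> card (sol_set G m \<times> sol_set G n)"
    by (intro card_inj_on_le)
  then show ?thesis by (simp add: card_cartesian_product)
qed

lemma card_sol_set_le_if_prime_power:
  assumes fin: "finite (carrier G)"
    and pp: "\<And>p k. Factorial_Ring.prime p \<Longrightarrow> k > 0 \<Longrightarrow> p ^ k dvd order G \<Longrightarrow>
      card (sol_set G (p ^ k)) \<le> p ^ k"
    and "d dvd order G"
  shows "card (sol_set G d) \<le> d"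
  using \<open>d dvd order G\<close>
proof (induction d rule: less_induct)
  case (less d)
  have "order G \<noteq> 0" using fin by (simp add: order_gt_0_iff_finite)
  then have "d \<noteq> 0" using less.prems by auto
  show ?case
  proof (cases "d = 1")
    case True
    then have "sol_set G d = {\<one>}" by (auto simp: sol_set_def)
    then show ?thesis using True by simp
  next
    case False
    then obtain p :: nat where p: "Factorial_Ring.prime p" "p dvd d" using prime_factor_nat by blast
    define k where "k = multiplicity p d"
    define m where "m = d div p ^ k"
    have d: "d = p ^ k * m"
      unfolding m_def k_def by (simp add: multiplicity_dvd)
    have "\<not> p dvd m"
      unfolding m_def k_def using multiplicity_decompose[OF \<open>d \<noteq> 0\<close>] prime_gt_1_nat[OF p(1)] by simp
    then have coprime: "coprime (p ^ k) m" using p(1) by (simp add: prime_imp_coprime)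
    have "k > 0"
      using p \<open>d \<noteq> 0\<close> unfolding k_def by (simp add: prime_multiplicity_gt_zero_iff)
    have "1 < p ^ k" using one_less_power[OF prime_gt_1_nat[OF p(1)] \<open>k > 0\<close>] .
    then have "m < d" using d \<open>d \<noteq> 0\<close> by simp
    have "p ^ k dvd order G" "m dvd order G"
      using d less.prems dvd_mult_left dvd_mult_right by metis+
    have "card (sol_set G d) \<le> card (sol_set G (p ^ k)) * card (sol_set G m)"
      using card_sol_set_mult_le[OF fin coprime] d p(1) by simp
    also have "\<dots> \<le> p ^ k * m"
      using pp[OF p(1) \<open>k > 0\<close> \<open>p ^ k dvd order G\<close>] less.IH[OF \<open>m < d\<close> \<open>m dvd order G\<close>]
      by (rule mult_le_mono)
    finally show ?thesis using d by simp
  qed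
qed

lemma mem_normal_subgroup_if_pow_eq_one:
  assumes "H \<lhd> G" and g: "g \<in> carrier G"
    and "g [^] n = \<one>" and "coprime n (card (rcosets H))"
  shows "g \<in> H"
proof -
  interpret normal H G by fact
  let ?F = "G Mod H"
  interpret F: group ?F by (rule factorgroup_is_group)
  interpret hom: group_hom G ?F "\<lambda>g. H #> g"
    by (simp add: group_hom_def group_hom_axioms_def r_coset_hom_Mod F.is_group is_group)
  have Hg: "H #> g \<in> carrier ?F" using g hom.hom_closed by blast
  have "(H #> g) [^]\<^bsub>?F\<^esub> n = \<one>\<^bsub>?F\<^esub>"
    using hom.hom_nat_pow[OF g, of n] \<open>g [^] n = \<one>\<close> by simp
  then have "F.ord (H #> g) dvd n" using F.pow_eq_id[OF Hg] by simp
  moreover have "F.ord (H #> g) dvd card (rcosets H)"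
    using F.ord_dvd_group_order[OF Hg] by (simp add: order_def FactGroup_def)
  ultimately have "F.ord (H #> g) = 1"
    using \<open>coprime n (card (rcosets H))\<close> by (metis coprime_common_divisor_nat dvd_1_iff_1)
  then have "H #> g = H" using F.ord_eq_1[OF Hg] by (simp add: FactGroup_def)
  then show ?thesis using coset_join1 g subgroup_axioms by blast
qed

lemma mem_subgroup_if_normalizes:
  assumes fin: "finite (carrier G)" and H: "subgroup H G" and y: "y \<in> carrier G"
    and "y [^] n = \<one>" and coprime: "coprime n (card (rcosets H))"
    and normalizes: "y <# H #> inv y = H"
  shows "y \<in> H"
proof -
  let ?N = "normalizer G H"
  let ?GN = "G\<lparr>carrier := ?N\<rparr>"
  have N: "subgroup ?N G" using normalizer_imp_subgroup H subgroup.subset by blast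
  interpret GN: group ?GN using subgroup_imp_group[OF N] .
  have "y \<in> ?N"
    using y normalizes H subgroup.subset
    unfolding normalizer_def stabilizer_def by auto
  have "card H \<noteq> 0"
    using H fin subgroup.subset subgroup.one_closed by (metis card_0_eq empty_iff finite_subset)
  have "card (rcosets\<^bsub>?GN\<^esub> H) * card (rcosets ?N) * card H
      = card (rcosets ?N) * (card (rcosets\<^bsub>?GN\<^esub> H) * card H)"
    by (simp add: ac_simps)
  also have "\<dots> = card (rcosets ?N) * card ?N"
    using GN.lagrange[OF normal.axioms(1)[OF subgroup_in_normalizer[OF H]]] by (simp add: order_def)
  also have "\<dots> = card (rcosets H) * card H"
    using lagrange[OF N] lagrange[OF H] by simp
  finally have "card (rcosets\<^bsub>?GN\<^esub> H) dvd card (rcosets H)"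
    using \<open>card H \<noteq> 0\<close> by (metis dvd_triv_left mult_right_cancel)
  then have "coprime n (card (rcosets\<^bsub>?GN\<^esub> H))"
    using coprime coprime_divisors dvd_refl by blast
  moreover have "y [^]\<^bsub>?GN\<^esub> n = \<one>\<^bsub>?GN\<^esub>"
    using \<open>y [^] n = \<one>\<close> \<open>y \<in> ?N\<close> nat_pow_consistent[of y n ?N] by simp
  ultimately show ?thesis
    using GN.mem_normal_subgroup_if_pow_eq_one[OF subgroup_in_normalizer[OF H]] \<open>y \<in> ?N\<close> by simp
qed

end

lemma (in group_action) prime_dvd_card_non_fixed_points:
  assumes p: "Factorial_Ring.prime p" and order: "order G = p ^ a"
    and C: "finite C" "C \<subseteq> E" and stable: "\<And>g x. g \<in> carrier G \<Longrightarrow> x \<in> C \<Longrightarrow> \<phi> g x \<in> C"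
  shows "p dvd card {x \<in> C. \<exists>g \<in> carrier G. \<phi> g x \<noteq> x}"
proof -
  interpret group G using group_hom group_hom.axioms(1) by blast
  define M where "M = {x \<in> C. \<exists>g \<in> carrier G. \<phi> g x \<noteq> x}"
  have orbit_M: "orbit G \<phi> x \<subseteq> M" if x: "x \<in> M" for x
  proof
    fix y assume "y \<in> orbit G \<phi> x"
    then obtain g where g: "g \<in> carrier G" "\<phi> g x = y" by (auto simp: orbit_def)
    have "\<exists>h \<in> carrier G. \<phi> h y \<noteq> y"
    proof (rule ccontr)
      assume fixed: "\<not> ?thesis"
      then have "\<phi> (inv g) y = y" using g by simp
      moreover have "\<phi> (inv g) y = x" using orbit_sym_aux g x C unfolding M_def by blast
      ultimately have "x = y" by simp
      then show False using fixed x unfolding M_def by blast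
    qed
    then show "y \<in> M" using stable g x unfolding M_def by blast
  qed
  have p_dvd_orbit: "p dvd card (orbit G \<phi> x)" if x: "x \<in> M" for x
  proof -
    have "x \<in> E" using x C unfolding M_def by blast
    then have "card (orbit G \<phi> x) dvd p ^ a"
      using orbit_stabilizer_theorem order by (metis dvd_triv_left)
    then obtain j where j: "card (orbit G \<phi> x) = p ^ j"
      using divides_primepow_nat[OF p] by blast
    have "j \<noteq> 0"
    proof
      assume "j = 0"
      then have "orbit G \<phi> x = {x}"
        using j orbit_refl[OF \<open>x \<in> E\<close>] by (auto simp: card_1_singleton_iff)
      then show False using x unfolding M_def orbit_def by blast
    qed
    then show ?thesis using j by simp
  qed
  have "M \<subseteq> E" using C unfolding M_def by blast
  have "M = \<Union>(orbit G \<phi> ` M)"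
    using orbit_M orbit_refl \<open>M \<subseteq> E\<close> by blast
  moreover have "pairwise disjnt (orbit G \<phi> ` M)"
  proof (rule pairwise_imageI)
    fix x y assume "x \<in> M" "y \<in> M" "orbit G \<phi> x \<noteq> orbit G \<phi> y"
    then show "disjnt (orbit G \<phi> x) (orbit G \<phi> y)"
      using disjoint_union[of "orbit G \<phi> x" "orbit G \<phi> y"] \<open>M \<subseteq> E\<close>
      unfolding orbits_def disjnt_def by blast
  qed
  moreover have "finite M" using C(1) unfolding M_def by simp
  then have "finite A" if "A \<in> orbit G \<phi> ` M" for A
    using that orbit_M finite_subset by blast
  ultimately have "card M = sum card (orbit G \<phi> ` M)"
    using card_Union_disjoint by metis
  also have "p dvd \<dots>" using p_dvd_orbit by (auto intro: dvd_sum)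
  finally show ?thesis unfolding M_def .
qed

definition cyclic_subgroups_of_order :: "('a, 'b) monoid_scheme \<Rightarrow> nat \<Rightarrow> 'a set set" where
  "cyclic_subgroups_of_order G d = {generate G {z} | z. z \<in> carrier G \<and> group.ord G z = d}"

lemma prime_power_le_totient:
  assumes "Factorial_Ring.prime (p::nat)"
  shows "p * p ^ a \<le> p * totient (p ^ a) + p ^ a"
proof (cases a)
  case (Suc b)
  have "p * totient (p ^ a) + p ^ a = p * (p ^ b * (p - 1) + p ^ b)"
    using Suc totient_prime_power_Suc[OF assms] by (simp add: algebra_simps)
  also have "p ^ b * (p - 1) + p ^ b = p ^ b * ((p - 1) + 1)"
    by (simp add: algebra_simps)
  also have "\<dots> = p ^ a" using Suc prime_gt_0_nat[OF assms] by simp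
  finally show ?thesis by simp
qed simp

context group begin

lemma mem_sylow_if_normalizes:
  assumes fin: "finite (carrier G)" and p: "Factorial_Ring.prime p"
    and order: "order G = p ^ a * m" and "\<not> p dvd m"
    and Q: "subgroup Q G" "card Q = p ^ a"
    and y: "y \<in> carrier G" "y [^] (p ^ a) = \<one>" and normalizes: "y <# Q #> inv y = Q"
  shows "y \<in> Q"
proof (rule mem_subgroup_if_normalizes[OF fin Q(1) y(1) y(2) _ normalizes])
  have "card (rcosets Q) * p ^ a = p ^ a * m" using lagrange[OF Q(1)] Q(2) order by simp
  then have "card (rcosets Q) = m" using prime_gt_0_nat[OF p] by simp
  then show "coprime (p ^ a) (card (rcosets Q))"
    using \<open>\<not> p dvd m\<close> p by (simp add: prime_imp_coprime)
qed

lemma conj_mem_cyclic_subgroups_of_order: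
  assumes fin: "finite (carrier G)" and g: "g \<in> carrier G"
    and "Q \<in> cyclic_subgroups_of_order G d"
  shows "g <# Q #> inv g \<in> cyclic_subgroups_of_order G d"
proof -
  obtain z where z: "z \<in> carrier G" "ord z = d" "Q = generate G {z}"
    using assms(3) by (auto simp: cyclic_subgroups_of_order_def)
  then have "g <# Q #> inv g = generate G {g \<otimes> z \<otimes> inv g}"
    using conj_generate_singleton[OF fin g] by simp
  then show ?thesis
    using g z ord_conj by (auto simp: cyclic_subgroups_of_order_def)
qed

lemma cyclic_subgroups_of_order_subgroup:
  assumes "Q \<in> cyclic_subgroups_of_order G d"
  shows "subgroup Q G" and "card Q = d"
  using assms generate_is_subgroup generate_pow_card
  by (auto simp: cyclic_subgroups_of_order_def)

lemma finite_cyclic_subgroups_of_order: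
  assumes "finite (carrier G)"
  shows "finite (cyclic_subgroups_of_order G d)"
proof (rule finite_subset)
  show "cyclic_subgroups_of_order G d \<subseteq> Pow (carrier G)"
    using cyclic_subgroups_of_order_subgroup(1) subgroup.subset by blast
qed (use assms in simp)

lemma card_ord_eq_card_cyclic_subgroups_times_totient:
  assumes fin: "finite (carrier G)"
  shows "card {z \<in> carrier G. ord z = d} = card (cyclic_subgroups_of_order G d) * totient d"
proof -
  let ?C = "cyclic_subgroups_of_order G d"
  let ?gens = "\<lambda>Q. {z \<in> Q. ord z = d}"
  have "{z \<in> carrier G. ord z = d} = (\<Union>Q\<in>?C. ?gens Q)"
  proof
    show "{z \<in> carrier G. ord z = d} \<subseteq> (\<Union>Q\<in>?C. ?gens Q)"
      using generate.incl[of _ "{_}" G] by (fastforce simp: cyclic_subgroups_of_order_def)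
    show "(\<Union>Q\<in>?C. ?gens Q) \<subseteq> {z \<in> carrier G. ord z = d}"
      using cyclic_subgroups_of_order_subgroup(1) subgroup.subset by blast
  qed
  moreover have "?gens Q1 \<inter> ?gens Q2 = {}" if "Q1 \<in> ?C" "Q2 \<in> ?C" "Q1 \<noteq> Q2" for Q1 Q2
  proof (rule ccontr)
    assume "?gens Q1 \<inter> ?gens Q2 \<noteq> {}"
    then obtain z where "z \<in> Q1" "z \<in> Q2" "ord z = d" by blast
    then have "Q1 = generate G {z}" "Q2 = generate G {z}"
      using that(1,2) subgroup_eq_generate_if_card_eq_ord[OF fin] cyclic_subgroups_of_order_subgroup
      by metis+
    then show False using that(3) by simp
  qed
  moreover have "card (?gens Q) = totient d" if "Q \<in> ?C" for Q
    using that card_generators_generate[OF fin] by (auto simp: cyclic_subgroups_of_order_def)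
  moreover have "finite (?gens Q)" if "Q \<in> ?C" for Q
    using that fin cyclic_subgroups_of_order_subgroup(1) subgroup.subset
    by (metis (no_types, lifting) finite_subset mem_Collect_eq subsetI)
  ultimately show ?thesis
    by (simp add: card_UN_disjoint finite_cyclic_subgroups_of_order[OF fin])
qed

lemma prime_dvd_card_cyclic_subgroups_of_order_minus_one:
  assumes fin: "finite (carrier G)" and p: "Factorial_Ring.prime p"
    and order: "order G = p ^ a * m" and "\<not> p dvd m"
    and x: "x \<in> carrier G" "ord x = p ^ a"
  shows "p dvd card (cyclic_subgroups_of_order G (p ^ a)) - 1"
proof -
  let ?C = "cyclic_subgroups_of_order G (p ^ a)"
  let ?E = "{H. H \<subseteq> carrier G}"
  \<comment> \<open>\<open>P = \<langle>x\<rangle>\<close> acts on \<open>?C\<close> by conjugation; a fixed \<open>Q\<close> is normalized by \<open>x\<close>,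
      so it contains \<open>x\<close> and equals \<open>P\<close>.\<close>
  let ?\<phi> = "\<lambda>g. \<lambda>H \<in> ?E. g <# H #> inv g"
  define P where "P = generate G {x}"
  have P: "subgroup P G" "card P = p ^ a" "P \<in> ?C"
    using x generate_is_subgroup generate_pow_card
    by (auto simp: P_def cyclic_subgroups_of_order_def)
  interpret P: group_action "G\<lparr>carrier := P\<rparr>" ?E ?\<phi>
    using group_action.induced_action[OF action_by_conjugation_on_power_set P(1)] .
  have C_sub_E: "?C \<subseteq> ?E"
    using cyclic_subgroups_of_order_subgroup(1) subgroup.subset by blast
  have "{Q \<in> ?C. \<exists>g \<in> P. ?\<phi> g Q \<noteq> Q} = ?C - {P}"
  proof (intro equalityI subsetI)
    fix Q assume Q: "Q \<in> ?C - {P}"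
    have "x <# Q #> inv x \<noteq> Q"
    proof
      assume "x <# Q #> inv x = Q"
      then have "x \<in> Q"
        using mem_sylow_if_normalizes[OF fin p order \<open>\<not> p dvd m\<close>] Q x
          cyclic_subgroups_of_order_subgroup by (metis DiffD1 pow_ord_eq_1)
      then have "Q = P"
        using subgroup_eq_generate_if_card_eq_ord[OF fin] Q x(2)
          cyclic_subgroups_of_order_subgroup unfolding P_def by (metis DiffD1)
      then show False using Q by simp
    qed
    moreover have "x \<in> P" unfolding P_def by (rule generate.incl) simp
    ultimately show "Q \<in> {Q \<in> ?C. \<exists>g \<in> P. ?\<phi> g Q \<noteq> Q}"
      using Q C_sub_E by auto
  next
    fix Q assume Q: "Q \<in> {Q \<in> ?C. \<exists>g \<in> P. ?\<phi> g Q \<noteq> Q}"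
    have "g <# P #> inv g = P" if "g \<in> P" for g
      using that P(1) subgroup.mem_carrier coset_join3 coset_join2 subgroup.m_inv_closed
      by (metis inv_closed)
    then show "Q \<in> ?C - {P}" using Q subgroup.subset[OF P(1)] by auto
  qed
  moreover have "p dvd card {Q \<in> ?C. \<exists>g \<in> carrier (G\<lparr>carrier := P\<rparr>). ?\<phi> g Q \<noteq> Q}"
  proof (rule P.prime_dvd_card_non_fixed_points[OF p _ finite_cyclic_subgroups_of_order[OF fin] C_sub_E])
    show "order (G\<lparr>carrier := P\<rparr>) = p ^ a" using P(2) by (simp add: order_def)
    show "?\<phi> g Q \<in> ?C" if "g \<in> carrier (G\<lparr>carrier := P\<rparr>)" "Q \<in> ?C" for g Q
      using that conj_mem_cyclic_subgroups_of_order[OF fin] C_sub_E subgroup.subset[OF P(1)] by auto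
  qed
  ultimately show ?thesis using P(3) finite_cyclic_subgroups_of_order[OF fin] by simp
qed

lemma sol_set_eq_generate_if_card_less:
  assumes fin: "finite (carrier G)" and p: "Factorial_Ring.prime p"
    and order: "order G = p ^ a * m" and "\<not> p dvd m"
    and x: "x \<in> carrier G" "ord x = p ^ a"
    and less: "card (sol_set G (p ^ a)) < p * p ^ a"
  shows "sol_set G (p ^ a) = generate G {x}"
proof -
  let ?C = "cyclic_subgroups_of_order G (p ^ a)"
  let ?O = "{z \<in> carrier G. ord z = p ^ a}"
  let ?t = "totient (p ^ a)"
  define P where "P = generate G {x}"
  have P: "subgroup P G" "card P = p ^ a" "P \<in> ?C"
    using x generate_is_subgroup generate_pow_card
    by (auto simp: P_def cyclic_subgroups_of_order_def)
  have finS: "finite (sol_set G (p ^ a))" using fin by (simp add: sol_set_def)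
  have finP: "finite P" using finite_subset[OF subgroup.subset[OF P(1)] fin] .
  have "?O \<union> P \<subseteq> sol_set G (p ^ a)"
    using generate_subset_sol_set_ord[OF fin x(1)] x(2)
    by (auto simp: sol_set_def P_def) (metis pow_ord_eq_1)
  then have "card (?O \<union> P) < p * p ^ a"
    using card_mono[OF finS] less by (meson le_less_trans)
  moreover have "card (?O \<union> P) + card (?O \<inter> P) = card ?O + card P"
    using card_Un_Int[OF _ finP, of ?O] fin by simp
  moreover have "?O \<inter> P = {y \<in> generate G {x}. ord y = ord x}"
    using subgroup.subset[OF P(1)] x(2) unfolding P_def by auto
  then have "card (?O \<inter> P) = ?t"
    using card_generators_generate[OF fin x(1)] x(2) by simp
  ultimately have count: "card ?C * ?t + p ^ a < p * p ^ a + ?t"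
    using card_ord_eq_card_cyclic_subgroups_times_totient[OF fin] P(2) by simp
  obtain r where "card ?C - 1 = p * r"
    using prime_dvd_card_cyclic_subgroups_of_order_minus_one[OF fin p order \<open>\<not> p dvd m\<close> x]
    by (elim dvdE)
  moreover have "card ?C \<noteq> 0" using P(3) finite_cyclic_subgroups_of_order[OF fin] by auto
  ultimately have r: "card ?C = 1 + p * r" by simp
  \<comment> \<open>Already \<open>p + 1\<close> cyclic subgroups of order \<open>p ^ a\<close> would not fit into \<open>sol_set G (p ^ a)\<close>.\<close>
  have "r = 0"
  proof (rule ccontr)
    assume "r \<noteq> 0"
    then have "(1 + p) * ?t \<le> card ?C * ?t" using r by simp
    then show False using count prime_power_le_totient[OF p, of a] by (simp add: algebra_simps)
  qed
  then have C: "?C = {P}"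
    using r P(3) finite_cyclic_subgroups_of_order[OF fin] by (simp add: card_1_singleton_iff) blast
  have "y \<in> P" if y: "y \<in> sol_set G (p ^ a)" for y
  proof (rule mem_sylow_if_normalizes[OF fin p order \<open>\<not> p dvd m\<close> P(1,2)])
    show "y \<in> carrier G" "y [^] (p ^ a) = \<one>" using y by (auto simp: sol_set_def)
    show "y <# P #> inv y = P"
      using conj_mem_cyclic_subgroups_of_order[OF fin \<open>y \<in> carrier G\<close> P(3)] C by simp
  qed
  then show ?thesis
    using generate_subset_sol_set_ord[OF fin x(1)] x(2) unfolding P_def by auto
qed

lemma ord_dvd_group_exp: "x \<in> carrier G \<Longrightarrow> ord x dvd group_exp G"
  unfolding group_exp_def by (simp add: dvd_Lcm)

lemma group_exp_pos:
  assumes "finite (carrier G)"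
  shows "group_exp G > 0"
proof -
  have "0 \<notin> ord ` carrier G" using ord_ge_1[OF assms] by (metis imageE not_one_le_zero)
  then have "Lcm (ord ` carrier G) \<noteq> 0" using Lcm_0_iff[of "ord ` carrier G"] assms by simp
  then show ?thesis unfolding group_exp_def by simp
qed

lemma frob_quot_le_mf_pp:
  assumes "finite (carrier G)" and "n \<in> pp_divisors G"
  shows "frob_quot G n \<le> mf_pp G"
proof -
  have "pp_divisors G \<subseteq> {n. n dvd group_exp G}" by (auto simp: pp_divisors_def)
  then have "finite (pp_divisors G)" by (rule finite_subset) (simp add: group_exp_pos[OF assms(1)])
  then show ?thesis unfolding mf_pp_def F_pp_def using assms(2) by (intro Max_ge) auto
qed

lemma exists_ord_eq_prime_power_if_frob_quot_less:
  assumes fin: "finite (carrier G)" and p: "Factorial_Ring.prime p" and "p ^ a dvd order G"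
    and frob: "\<And>n. n \<in> pp_divisors G \<Longrightarrow> frob_quot G n < p"
  shows "\<exists>x \<in> carrier G. ord x = p ^ a"
proof -
  obtain m where "order G = p ^ a * m" using \<open>p ^ a dvd order G\<close> by (elim dvdE)
  then obtain P where P: "subgroup P G" "card P = p ^ a"
    using sylow_thm[OF p is_group _ fin] by blast
  have ord_dvd: "ord y dvd p ^ a" if "y \<in> P" for y
  proof -
    interpret P: group "G\<lparr>carrier := P\<rparr>" using subgroup_imp_group[OF P(1)] .
    have "y [^] (p ^ a) = \<one>"
      using P.pow_order_eq_1[of y] that P(2) nat_pow_consistent[of y _ P]
      by (simp add: order_def)
    then show ?thesis using pow_eq_id that subgroup.mem_carrier[OF P(1)] by blast
  qed
  have "\<forall>y. y \<in> P \<longrightarrow> ord y < order G + 1"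
    using ord_le_group_order[OF fin] subgroup.mem_carrier[OF P(1)] by (simp add: less_Suc_eq_le)
  then obtain x where x: "x \<in> P" "\<And>y. y \<in> P \<Longrightarrow> ord y \<le> ord x"
    using ex_has_greatest_nat[of "\<lambda>y. y \<in> P", OF subgroup.one_closed[OF P(1)]] by blast
  obtain j where j: "j \<le> a" "ord x = p ^ j"
    using ord_dvd[OF x(1)] divides_primepow_nat[OF p] by blast
  have sub: "P \<subseteq> sol_set G (p ^ j)"
  proof
    fix y assume y: "y \<in> P"
    then obtain i where i: "ord y = p ^ i"
      using ord_dvd divides_primepow_nat[OF p] by blast
    then have "p ^ i \<le> p ^ j" using x(2)[OF y] j(2) by simp
    then have "i \<le> j" using prime_gt_1_nat[OF p] by simp
    then have "ord y dvd p ^ j" using i by (simp add: le_imp_power_dvd)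
    then show "y \<in> sol_set G (p ^ j)"
      using y subgroup.mem_carrier[OF P(1)] pow_eq_id by (simp add: sol_set_def)
  qed
  have "finite (sol_set G (p ^ j))" using fin by (simp add: sol_set_def)
  then have "p ^ a \<le> card (sol_set G (p ^ j))" using card_mono[OF _ sub] P(2) by simp
  then have "p ^ a div p ^ j \<le> frob_quot G (p ^ j)"
    unfolding frob_quot_def by (rule div_le_mono)
  moreover have "p ^ j dvd group_exp G"
    using ord_dvd_group_exp[OF subgroup.mem_carrier[OF P(1) x(1)]] j(2) by simp
  then have "p ^ j \<in> pp_divisors G" using p unfolding pp_divisors_def by blast
  ultimately have "p ^ a div p ^ j < p" using frob by (meson le_less_trans)
  then have "p ^ (a - j) < p ^ 1" using j(1) prime_gt_0_nat[OF p] by (simp add: power_diff)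
  then have "a - j < 1" using power_less_imp_less_exp prime_gt_1_nat[OF p] by blast
  then have "j = a" using j(1) by simp
  then show ?thesis using j(2) x(1) subgroup.mem_carrier[OF P(1)] by blast
qed

lemma card_sol_set_prime_power_le_if_frob_quot_less:
  assumes fin: "finite (carrier G)" and p: "Factorial_Ring.prime p" and "p ^ k dvd order G"
    and frob: "\<And>n. n \<in> pp_divisors G \<Longrightarrow> frob_quot G n < p"
  shows "card (sol_set G (p ^ k)) \<le> p ^ k"
proof -
  define a where "a = multiplicity p (order G)"
  define m where "m = order G div p ^ a"
  have "order G \<noteq> 0" using fin by (simp add: order_gt_0_iff_finite)
  have order: "order G = p ^ a * m"
    unfolding a_def m_def by (simp add: multiplicity_dvd)
  have "\<not> p dvd m"
    unfolding a_def m_def using multiplicity_decompose[OF \<open>order G \<noteq> 0\<close>] prime_gt_1_nat[OF p]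
    by simp
  have "k \<le> a"
    unfolding a_def using \<open>p ^ k dvd order G\<close> prime_gt_1_nat[OF p]
      power_dvd_iff_le_multiplicity[OF \<open>order G \<noteq> 0\<close>, of p k] by simp
  have "p ^ a dvd order G" using order by simp
  then obtain x where x: "x \<in> carrier G" "ord x = p ^ a"
    using exists_ord_eq_prime_power_if_frob_quot_less[OF fin p _ frob] by blast
  have "p ^ a dvd group_exp G" using ord_dvd_group_exp[OF x(1)] x(2) by simp
  then have "p ^ a \<in> pp_divisors G" using p unfolding pp_divisors_def by blast
  then have "card (sol_set G (p ^ a)) div p ^ a < p" using frob by (simp add: frob_quot_def)
  then have "card (sol_set G (p ^ a)) < p * p ^ a"
    using prime_gt_0_nat[OF p] by (simp add: div_less_iff_less_mult mult.commute)
  then have sol: "sol_set G (p ^ a) = generate G {x}"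
    using sol_set_eq_generate_if_card_less[OF fin p order \<open>\<not> p dvd m\<close> x] by simp
  have "p ^ k dvd p ^ a" using \<open>k \<le> a\<close> by (rule le_imp_power_dvd)
  have "sol_set G (p ^ k) \<subseteq> {y \<in> sol_set G (p ^ a). y [^] (p ^ k) = \<one>}"
  proof (clarsimp simp: sol_set_def)
    fix y assume y: "y \<in> carrier G" "y [^] (p ^ k) = \<one>"
    then have "ord y dvd p ^ k" using pow_eq_id by simp
    then have "ord y dvd p ^ a" using \<open>p ^ k dvd p ^ a\<close> by (rule dvd_trans)
    then show "y [^] (p ^ a) = \<one>" using pow_eq_id[OF y(1)] by simp
  qed
  moreover have "finite {y \<in> sol_set G (p ^ a). y [^] (p ^ k) = \<one>}"
    using fin by (simp add: sol_set_def)
  ultimately have "card (sol_set G (p ^ k)) \<le> card {y \<in> generate G {x}. y [^] (p ^ k) = \<one>}"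
    unfolding sol by (rule card_mono[rotated])
  also have "\<dots> \<le> p ^ k"
    using card_pow_eq_one_in_generate_le[OF fin x(1)] x(2) \<open>p ^ k dvd p ^ a\<close> by simp
  finally show ?thesis .
qed

end

theorem corollary1p3:
  fixes G :: "('a, 'b) monoid_scheme" and q :: nat
  assumes "group G" and "finite (carrier G)" and "order G > 1"
    and "q = Min {p. Factorial_Ring.prime (p::nat) \<and> p dvd order G}"
    and "mf_pp G < q"
  shows "cyclic_group G"
proof -
  interpret group G by fact
  have fin: "finite (carrier G)" by fact
  have frob_less_q: "frob_quot G n < q" if "n \<in> pp_divisors G" for n
    using frob_quot_le_mf_pp[OF fin that] \<open>mf_pp G < q\<close> by simp
  have "{p. Factorial_Ring.prime p \<and> p dvd order G} \<subseteq> {..order G}"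
    using \<open>order G > 1\<close> by (auto dest: dvd_imp_le)
  then have "finite {p. Factorial_Ring.prime p \<and> p dvd order G}" by (rule finite_subset) simp
  then have q_le: "q \<le> p" if "Factorial_Ring.prime p" "p dvd order G" for p
    unfolding \<open>q = Min _\<close> using that by (intro Min_le) simp_all
  show ?thesis
  proof (rule cyclic_group_if_card_sol_set_le[OF fin card_sol_set_le_if_prime_power[OF fin]])
    fix p k assume p: "Factorial_Ring.prime p" and "k > 0" and pk: "p ^ k dvd order G"
    then have "p dvd p ^ k" by (simp add: dvd_power)
    then have "p dvd order G" using pk by (rule dvd_trans)
    then have "frob_quot G n < p" if "n \<in> pp_divisors G" for n
      using frob_less_q[OF that] q_le[OF p] by simp
    then show "card (sol_set G (p ^ k)) \<le> p ^ k"
      by (rule card_sol_set_prime_power_le_if_frob_quot_less[OF fin p pk])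
  qed
qed

end
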